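(* Let $\vec a\in\mathbb R^4\setminus\{0\}$, let $V\in\mathfrak X(\mathbb H^3)$ be the proper conformal vector field $V(p)=\vec a+\langle\vec a,p\rangle p$, let $q\neq0$, and let $\gamma\colon I\to\mathbb H^3$ be a curve parametrized by arc-length which is a conformal trajectory of $V$. Then there exist $a_1,a_2\in\mathbb R$ such that $$\langle\gamma(s),\vec a\rangle=a_1\cosh s+a_2\sinh s\quad\text{for all }s\in I.$$ If $\gamma$ is a geodesic, then $\gamma(s)=\cosh(s)\,\vec v+\sinh(s)\,\vec w$ with $\langle\vec v,\vec v\rangle=-1$, $\langle\vec w,\vec w\rangle=1$, $\langle\vec v,\vec w\rangle=0$ and $\vec a\in\operatorname{span}\{\vec v,\vec w\}$; that is, $\gamma$ is obtained by intersecting $\mathbb H^3$ with a Lorentzian (Minkowski) $2$-plane through the origin containing $\vec a$. If $\gamma$ is not a geodesic, then its curvature is constant with $\kappa^2=q^2\big(\langle\vec a,\vec a\rangle+a_1^2-a_2^2\big)$, and its torsion is $\tau(s)=q\,(a_1\sinh s+a_2\cosh s)$.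
   Context: $\mathbb R^4$ carries the Lorentzian metric $\langle\cdot,\cdot\rangle=dx^2+dy^2+dz^2-dt^2$ and $\mathbb H^3=\{p\in\mathbb R^4:\langle p,p\rangle=-1,\ t>0\}$ with the induced Riemannian metric; its Levi-Civita connection satisfies $\nabla_{\gamma'}\gamma'=\gamma''-\gamma$ for unit-speed curves. The cross product of $u,v\in T_p\mathbb H^3$ is the unique $u\times v\in T_p\mathbb H^3$ with $\langle u\times v,w\rangle=\det(u,v,w,p)$ for all $w\in T_p\mathbb H^3$. For a fixed real $q\neq0$, a conformal trajectory of $V$ is a regular curve with $\nabla_{\gamma'}\gamma'=q\,V\times\gamma'$. Frenet frame of a non-geodesic unit-speed curve: $T=\gamma'$, $\nabla_TT=\kappa N$ with $\kappa>0$, $B=T\times N$, $\nabla_TN=-\kappa T+\tau B$, $\nabla_TB=-\tau N$; $\kappa$ is the curvature, $\tau$ the torsion. *)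

theory Defs
  imports "HOL-Analysis.Analysis"
begin

definition lor :: "real^4 \<Rightarrow> real^4 \<Rightarrow> real" where
  "lor u v = u$1 * v$1 + u$2 * v$2 + u$3 * v$3 - u$4 * v$4"

definition H3 :: "(real^4) set" where
  "H3 = {p. lor p p = -1 \<and> p$4 > 0}"

definition tangent_space :: "real^4 \<Rightarrow> (real^4) set" where
  "tangent_space p = {w. lor w p = 0}"

definition det4 :: "real^4 \<Rightarrow> real^4 \<Rightarrow> real^4 \<Rightarrow> real^4 \<Rightarrow> real" where
  "det4 u v w p = det (\<chi> i. if i = 1 then u else if i = 2 then v else if i = 3 then w else p)"

definition hcross :: "real^4 \<Rightarrow> real^4 \<Rightarrow> real^4 \<Rightarrow> real^4" where
  "hcross p u v = (THE c. c \<in> tangent_space p \<and>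
      (\<forall>w \<in> tangent_space p. lor c w = det4 u v w p))"

definition confV :: "real^4 \<Rightarrow> real^4 \<Rightarrow> real^4" where
  "confV a p = a + lor a p *\<^sub>R p"

text \<open>Levi-Civita covariant derivative along a curve gamma in H^3 of a vector field X along gamma:
  tangential projection of the ambient derivative X'(s).\<close>
definition covD :: "(real \<Rightarrow> real^4) \<Rightarrow> (real \<Rightarrow> real^4) \<Rightarrow> real \<Rightarrow> real^4" where
  "covD \<gamma> X s = vector_derivative X (at s) + lor (vector_derivative X (at s)) (\<gamma> s) *\<^sub>R \<gamma> s"

end

theory Submission imports Defs begin

text \<open>On \<open>H3\<close> the cross product is an explicit alternating trilinear map of \<open>\<real>\<^sup>4\<close> built from
  3\<times>3 minors, and since \<open>V(p) - a\<close> is a multiple of \<open>p\<close>, the trajectory equation becomes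
  \<open>\<gamma>'' = \<gamma> + q X\<close> with \<open>X = \<gamma> \<times> a \<times> \<gamma>'\<close>. As \<open>X\<close> is orthogonal to \<open>a\<close>, the functions
  \<open>f = \<langle>\<gamma>,a\<rangle>\<close> and \<open>g = \<langle>\<gamma>',a\<rangle>\<close> satisfy \<open>f' = g\<close>, \<open>g' = f\<close>, so they are combinations of
  \<open>cosh\<close> and \<open>sinh\<close>. A Lagrange-type identity gives \<open>\<langle>X,X\<rangle> = \<langle>a,a\<rangle> + f\<^sup>2 - g\<^sup>2\<close>, which is
  constant; so the curvature \<open>|q| |X|\<close> is constant and \<open>N = X/|X|\<close> can be differentiated
  directly, giving the torsion \<open>q g\<close>. For a geodesic \<open>X = 0\<close>, so \<open>\<gamma>'' = \<gamma>\<close>, and the vanishing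
  of \<open>\<gamma> \<times> a \<times> \<gamma>'\<close> on the spacelike tangent space forces \<open>a \<in> span {\<gamma>, \<gamma>'}\<close>.\<close>

lemma det_4: "det (A::'a::comm_ring_1^4^4) =
  A$1$1 * (A$2$2*(A$3$3*A$4$4 - A$3$4*A$4$3) - A$2$3*(A$3$2*A$4$4 - A$3$4*A$4$2) + A$2$4*(A$3$2*A$4$3 - A$3$3*A$4$2))
 - A$1$2 * (A$2$1*(A$3$3*A$4$4 - A$3$4*A$4$3) - A$2$3*(A$3$1*A$4$4 - A$3$4*A$4$1) + A$2$4*(A$3$1*A$4$3 - A$3$3*A$4$1))
 + A$1$3 * (A$2$1*(A$3$2*A$4$4 - A$3$4*A$4$2) - A$2$2*(A$3$1*A$4$4 - A$3$4*A$4$1) + A$2$4*(A$3$1*A$4$2 - A$3$2*A$4$1))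
 - A$1$4 * (A$2$1*(A$3$2*A$4$3 - A$3$3*A$4$2) - A$2$2*(A$3$1*A$4$3 - A$3$3*A$4$1) + A$2$3*(A$3$1*A$4$2 - A$3$2*A$4$1))"
proof -
  have f1: "finite {2::4, 3, 4}" "1 \<notin> {2::4, 3, 4}"
    and f2: "finite {3::4, 4}" "2 \<notin> {3::4, 4}"
    and f3: "finite {4::4}" "3 \<notin> {4::4}" by auto
  show ?thesis
    unfolding det_def UNIV_4 sum_over_permutations_insert[OF f1]
      sum_over_permutations_insert[OF f2] sum_over_permutations_insert[OF f3] permutes_sing
    by (simp add: sign_swap_id permutation_swap_id permutation_compose sign_compose sign_id
        swap_id_eq transpose_def algebra_simps)
qed

lemma lor_commute: "lor u v = lor v u" by (simp add: lor_def algebra_simps)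
lemma lor_add_left: "lor (u + u') v = lor u v + lor u' v" by (simp add: lor_def algebra_simps)
lemma lor_add_right: "lor u (v + v') = lor u v + lor u v'" by (simp add: lor_def algebra_simps)
lemma lor_diff_left: "lor (u - u') v = lor u v - lor u' v" by (simp add: lor_def algebra_simps)
lemma lor_diff_right: "lor u (v - v') = lor u v - lor u v'" by (simp add: lor_def algebra_simps)
lemma lor_scaleR_left: "lor (c *\<^sub>R u) v = c * lor u v" by (simp add: lor_def algebra_simps)
lemma lor_scaleR_right: "lor u (c *\<^sub>R v) = c * lor u v" by (simp add: lor_def algebra_simps)
lemma lor_zero_left: "lor 0 v = 0" by (simp add: lor_def)
lemma lor_zero_right: "lor u 0 = 0" by (simp add: lor_def)

lemmas lor_simps = lor_add_left lor_add_right lor_diff_left lor_diff_right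
  lor_scaleR_left lor_scaleR_right lor_zero_left lor_zero_right

lemma bounded_bilinear_lor: "bounded_bilinear lor"
  unfolding bilinear_conv_bounded_bilinear[symmetric] bilinear_def
  by (auto intro!: linearI simp: lor_simps)

lemma has_real_derivative_lor:
  assumes "(f has_vector_derivative f') (at s)" "(g has_vector_derivative g') (at s)"
  shows "((\<lambda>s. lor (f s) (g s)) has_real_derivative lor f' (g s) + lor (f s) g') (at s)"
  using bounded_bilinear.has_vector_derivative[OF bounded_bilinear_lor assms]
  unfolding has_real_derivative_iff_has_vector_derivative by (simp add: add.commute)

lemma sum_squares_3_cauchy_schwarz:
  fixes x1 x2 x3 y1 y2 y3 :: real
  shows "(x1*y1 + x2*y2 + x3*y3)^2 \<le> (x1^2 + x2^2 + x3^2) * (y1^2 + y2^2 + y3^2)"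
proof -
  have "(x1^2 + x2^2 + x3^2) * (y1^2 + y2^2 + y3^2) - (x1*y1 + x2*y2 + x3*y3)^2
    = (x1*y2 - x2*y1)^2 + (x1*y3 - x3*y1)^2 + (x2*y3 - x3*y2)^2" by algebra
  then show ?thesis by (smt (verit) zero_le_power2)
qed

lemma lor_self_nonneg_tangent:
  assumes "p \<in> H3" "lor w p = 0"
  shows "lor w w \<ge> 0" and "lor w w = 0 \<Longrightarrow> w = 0"
proof -
  define P where "P = p$1^2 + p$2^2 + p$3^2"
  define W where "W = w$1^2 + w$2^2 + w$3^2"
  have "P \<ge> 0" "W \<ge> 0" unfolding P_def W_def by simp_all
  have p4: "p$4^2 = 1 + P" using assms(1) unfolding H3_def lor_def P_def by (simp add: power2_eq_square)
  have "w$4 * p$4 = w$1*p$1 + w$2*p$2 + w$3*p$3" using assms(2) unfolding lor_def by simp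
  then have "(w$4 * p$4)^2 \<le> W * P" unfolding W_def P_def by (metis sum_squares_3_cauchy_schwarz)
  then have cs: "w$4^2 + w$4^2 * P \<le> W * P" using p4 by (simp add: power_mult_distrib algebra_simps)
  have ww: "lor w w = W - w$4^2" unfolding lor_def W_def by (simp add: power2_eq_square)
  show "lor w w \<ge> 0"
  proof (rule ccontr)
    assume "\<not> lor w w \<ge> 0"
    then have "W < w$4^2" using ww by simp
    then have "W * P \<le> w$4^2 * P" using \<open>P \<ge> 0\<close> by (simp add: mult_right_mono)
    with cs \<open>W < w$4^2\<close> \<open>W \<ge> 0\<close> show False by simp
  qed
  assume "lor w w = 0"
  then have "W = w$4^2" using ww by simp
  with cs have "w$4 = 0" by simp
  with \<open>W = w$4^2\<close> have "W = 0" by simp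
  then have "w$1 = 0" "w$2 = 0" "w$3 = 0" unfolding W_def by (simp_all add: add_nonneg_eq_0_iff)
  with \<open>w$4 = 0\<close> show "w = 0" by (simp add: vec_eq_iff forall_4)
qed

definition minor3 :: "real^4 \<Rightarrow> real^4 \<Rightarrow> real^4 \<Rightarrow> 4 \<Rightarrow> 4 \<Rightarrow> 4 \<Rightarrow> real" where
  "minor3 x y z i j k =
     x$i * (y$j*z$k - y$k*z$j) - x$j * (y$i*z$k - y$k*z$i) + x$k * (y$i*z$j - y$j*z$i)"

text \<open>The cofactors of the row \<open>w\<close> in \<open>det4 u v w p\<close>, with the sign of the time component
  flipped to compensate for the Lorentz metric.\<close>

definition lcross :: "real^4 \<Rightarrow> real^4 \<Rightarrow> real^4 \<Rightarrow> real^4" where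
  "lcross p u v = (\<chi> i. if i = 1 then minor3 u v p 2 3 4 else if i = 2 then - minor3 u v p 1 3 4
     else if i = 3 then minor3 u v p 1 2 4 else minor3 u v p 1 2 3)"

lemma lcross_nth:
  "lcross p u v $ 1 = minor3 u v p 2 3 4" "lcross p u v $ 2 = - minor3 u v p 1 3 4"
  "lcross p u v $ 3 = minor3 u v p 1 2 4" "lcross p u v $ 4 = minor3 u v p 1 2 3"
  by (simp_all add: lcross_def)

lemma lor_lcross: "lor (lcross p u v) w = det4 u v w p"
  unfolding det4_def det_4 lor_def lcross_nth minor3_def by simp algebra

lemma lor_lcross_base: "lor (lcross p u v) p = 0"
  unfolding lor_def lcross_nth minor3_def by algebra

lemma lor_lcross_left: "lor (lcross p u v) u = 0"
  unfolding lor_def lcross_nth minor3_def by algebra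

lemma lcross_base_left: "lcross p p v = 0"
  by (simp add: vec_eq_iff forall_4 lcross_nth minor3_def algebra_simps)

lemma lcross_base_right: "lcross p u p = 0"
  by (simp add: vec_eq_iff forall_4 lcross_nth minor3_def algebra_simps)

lemma lcross_add_left: "lcross p (u + u') v = lcross p u v + lcross p u' v"
  by (simp add: vec_eq_iff forall_4 lcross_nth minor3_def algebra_simps)

lemma lcross_scaleR_left: "lcross p (c *\<^sub>R u) v = c *\<^sub>R lcross p u v"
  by (simp add: vec_eq_iff forall_4 lcross_nth minor3_def algebra_simps)

lemma lcross_add_right: "lcross p u (v + v') = lcross p u v + lcross p u v'"
  by (simp add: vec_eq_iff forall_4 lcross_nth minor3_def algebra_simps)

lemma lcross_scaleR_right: "lcross p u (c *\<^sub>R v) = c *\<^sub>R lcross p u v"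
  by (simp add: vec_eq_iff forall_4 lcross_nth minor3_def algebra_simps)

lemma lcross_add_base: "lcross (p + p') u v = lcross p u v + lcross p' u v"
  by (simp add: vec_eq_iff forall_4 lcross_nth minor3_def algebra_simps)

lemma lcross_scaleR_base: "lcross (c *\<^sub>R p) u v = c *\<^sub>R lcross p u v"
  by (simp add: vec_eq_iff forall_4 lcross_nth minor3_def algebra_simps)

lemma lcross_lcross:
  "lcross p u (lcross p v w) =
     (lor u p * lor w p - lor p p * lor u w) *\<^sub>R v + (lor p p * lor u v - lor u p * lor v p) *\<^sub>R w
   + (lor u w * lor v p - lor u v * lor w p) *\<^sub>R p"
  by (simp add: vec_eq_iff forall_4 lcross_nth minor3_def lor_def, algebra?)

lemma lor_lcross_self:
  "lor (lcross p u v) (lcross p u v) = - lor p p * (lor u u * lor v v - (lor u v)^2)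
     + lor u u * (lor v p)^2 + lor v v * (lor u p)^2 - 2 * lor u v * lor u p * lor v p"
  unfolding lcross_nth minor3_def lor_def by algebra

lemma bounded_bilinear_lcross: "bounded_bilinear (\<lambda>p v. lcross p u v)"
  unfolding bilinear_conv_bounded_bilinear[symmetric] bilinear_def
  by (auto intro!: linearI simp: lcross_add_base lcross_scaleR_base lcross_add_right lcross_scaleR_right)

lemma has_vector_derivative_lcross:
  assumes "(f has_vector_derivative f') (at s)" "(g has_vector_derivative g') (at s)"
  shows "((\<lambda>s. lcross (f s) u (g s)) has_vector_derivative lcross (f s) u g' + lcross f' u (g s)) (at s)"
  using bounded_bilinear.has_vector_derivative[OF bounded_bilinear_lcross assms] by simp

lemma hcross_eq_lcross:
  assumes "p \<in> H3"
  shows "hcross p u v = lcross p u v"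
  unfolding hcross_def
proof (rule the_equality)
  show "lcross p u v \<in> tangent_space p \<and> (\<forall>w\<in>tangent_space p. lor (lcross p u v) w = det4 u v w p)"
    by (simp add: tangent_space_def lor_lcross_base lor_lcross)
  fix c assume c: "c \<in> tangent_space p \<and> (\<forall>w\<in>tangent_space p. lor c w = det4 u v w p)"
  define d where "d = c - lcross p u v"
  have dp: "lor d p = 0" using c unfolding d_def tangent_space_def by (simp add: lor_simps lor_lcross_base)
  then have "lor c d = det4 u v d p" using c by (simp add: tangent_space_def)
  then have "lor d d = 0" by (simp add: d_def lor_diff_left lor_lcross)
  then show "c = lcross p u v" using lor_self_nonneg_tangent(2)[OF assms dp] unfolding d_def by simp
qed

lemma has_real_derivative_locally_constant:
  assumes "open I" "s \<in> I" "\<And>x. x \<in> I \<Longrightarrow> f x = c" "(f has_real_derivative D) (at s)"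
  shows "D = 0"
proof -
  have "(f has_real_derivative 0) (at s)"
    by (rule has_field_derivative_transform_within_open[OF DERIV_const assms(1,2)]) (simp add: assms(3))
  with assms(4) show ?thesis using DERIV_unique by blast
qed

lemma hyperbolic_ode_solution:
  fixes f g :: "real \<Rightarrow> 'a::real_normed_vector"
  assumes "is_interval I"
    and f: "\<And>s. s \<in> I \<Longrightarrow> (f has_vector_derivative g s) (at s)"
    and g: "\<And>s. s \<in> I \<Longrightarrow> (g has_vector_derivative f s) (at s)"
  shows "\<exists>c1 c2. \<forall>s\<in>I. f s = cosh s *\<^sub>R c1 + sinh s *\<^sub>R c2 \<and> g s = sinh s *\<^sub>R c1 + cosh s *\<^sub>R c2"
proof -
  have I: "convex I" using assms(1) by (simp add: is_interval_convex)
  obtain c1 where c1: "\<And>s. s \<in> I \<Longrightarrow> cosh s *\<^sub>R f s - sinh s *\<^sub>R g s = c1"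
  proof (rule has_vector_derivative_zero_constant[OF I])
    fix s assume "s \<in> I"
    have "((\<lambda>s. cosh s *\<^sub>R f s - sinh s *\<^sub>R g s) has_vector_derivative
        (cosh s *\<^sub>R g s + sinh s *\<^sub>R f s) - (sinh s *\<^sub>R f s + cosh s *\<^sub>R g s)) (at s)"
      by (intro derivative_intros f g \<open>s \<in> I\<close>) (auto intro!: derivative_eq_intros)
    then show "((\<lambda>s. cosh s *\<^sub>R f s - sinh s *\<^sub>R g s) has_vector_derivative 0) (at s within I)"
      by (simp add: has_vector_derivative_at_within)
  qed blast
  obtain c2 where c2: "\<And>s. s \<in> I \<Longrightarrow> cosh s *\<^sub>R g s - sinh s *\<^sub>R f s = c2"
  proof (rule has_vector_derivative_zero_constant[OF I])
    fix s assume "s \<in> I"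
    have "((\<lambda>s. cosh s *\<^sub>R g s - sinh s *\<^sub>R f s) has_vector_derivative
        (cosh s *\<^sub>R f s + sinh s *\<^sub>R g s) - (sinh s *\<^sub>R g s + cosh s *\<^sub>R f s)) (at s)"
      by (intro derivative_intros f g \<open>s \<in> I\<close>) (auto intro!: derivative_eq_intros)
    then show "((\<lambda>s. cosh s *\<^sub>R g s - sinh s *\<^sub>R f s) has_vector_derivative 0) (at s within I)"
      by (simp add: has_vector_derivative_at_within)
  qed blast
  have "f s = cosh s *\<^sub>R c1 + sinh s *\<^sub>R c2 \<and> g s = sinh s *\<^sub>R c1 + cosh s *\<^sub>R c2" if "s \<in> I" for s
  proof -
    have "(cosh s)\<^sup>2 - (sinh s)\<^sup>2 = 1" by (simp add: cosh_square_eq)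
    then show ?thesis
      unfolding c1[OF that, symmetric] c2[OF that, symmetric]
      by (simp add: algebra_simps power2_eq_square flip: scaleR_add_left scaleR_diff_left)
  qed
  then show ?thesis by blast
qed

lemma lor_lcross_self_orthonormal:
  assumes "lor p p = -1" "lor u u = 1" "lor u p = 0"
  shows "lor (lcross p a u) (lcross p a u) = lor a a + (lor a p)\<^sup>2 - (lor a u)\<^sup>2"
  using assms by (simp add: lor_lcross_self lor_commute[of p u])

lemma lcross_eq_0_decompose:
  assumes "p \<in> H3" "lor u u = 1" "lor u p = 0" "lcross p a u = 0"
  shows "a = lor a u *\<^sub>R u - lor a p *\<^sub>R p"
proof -
  have pp: "lor p p = -1" using assms(1) by (simp add: H3_def)
  define d where "d = a + lor a p *\<^sub>R p - lor a u *\<^sub>R u"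
  have dp: "lor d p = 0" using pp assms(3) by (simp add: d_def lor_simps)
  have "lor d d = lor (lcross p a u) (lcross p a u)"
    using pp assms(2,3) unfolding lor_lcross_self_orthonormal[OF pp assms(2,3)]
    by (simp add: d_def lor_simps lor_commute[of p u] lor_commute[of p a] lor_commute[of u a]
        power2_eq_square algebra_simps)
  then have "d = 0" using assms(4) lor_self_nonneg_tangent(2)[OF assms(1) dp] by (simp add: lor_zero_left)
  then show ?thesis by (simp add: d_def algebra_simps)
qed

definition frenet_curvature :: "(real \<Rightarrow> real^4) \<Rightarrow> (real \<Rightarrow> real^4) \<Rightarrow> real \<Rightarrow> real" where
  "frenet_curvature \<gamma> T s = sqrt (lor (covD \<gamma> T s) (covD \<gamma> T s))"

definition frenet_normal :: "(real \<Rightarrow> real^4) \<Rightarrow> (real \<Rightarrow> real^4) \<Rightarrow> real \<Rightarrow> real^4" where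
  "frenet_normal \<gamma> T s = (1 / frenet_curvature \<gamma> T s) *\<^sub>R covD \<gamma> T s"

locale conformal_trajectory =
  fixes a :: "real^4" and q :: real and I :: "real set" and \<gamma> \<gamma>' :: "real \<Rightarrow> real^4"
  assumes open_I: "open I" and interval_I: "is_interval I"
    and in_H3: "\<And>s. s \<in> I \<Longrightarrow> \<gamma> s \<in> H3"
    and velocity: "\<And>s. s \<in> I \<Longrightarrow> (\<gamma> has_vector_derivative \<gamma>' s) (at s)"
    and velocity_differentiable: "\<And>s. s \<in> I \<Longrightarrow> \<gamma>' differentiable (at s)"
    and unit_speed: "\<And>s. s \<in> I \<Longrightarrow> lor (\<gamma>' s) (\<gamma>' s) = 1"
    and trajectory: "\<And>s. s \<in> I \<Longrightarrow> covD \<gamma> \<gamma>' s = q *\<^sub>R hcross (\<gamma> s) (confV a (\<gamma> s)) (\<gamma>' s)"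
begin

lemma lor_position_self: "s \<in> I \<Longrightarrow> lor (\<gamma> s) (\<gamma> s) = -1"
  using in_H3 by (simp add: H3_def)

lemma lor_velocity_position:
  assumes "s \<in> I"
  shows "lor (\<gamma>' s) (\<gamma> s) = 0"
proof -
  have "lor (\<gamma>' s) (\<gamma> s) + lor (\<gamma> s) (\<gamma>' s) = 0"
    by (rule has_real_derivative_locally_constant[OF open_I assms _
          has_real_derivative_lor[OF velocity[OF assms] velocity[OF assms]]])
      (rule lor_position_self)
  then show ?thesis by (simp add: lor_commute)
qed

definition field_cross :: "real \<Rightarrow> real^4" where
  "field_cross s = lcross (\<gamma> s) a (\<gamma>' s)"

lemma covD_velocity: "s \<in> I \<Longrightarrow> covD \<gamma> \<gamma>' s = q *\<^sub>R field_cross s"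
  by (simp add: trajectory in_H3 hcross_eq_lcross confV_def field_cross_def
      lcross_add_left lcross_scaleR_left lcross_base_left)

lemma velocity_has_derivative:
  assumes "s \<in> I"
  shows "(\<gamma>' has_vector_derivative \<gamma> s + q *\<^sub>R field_cross s) (at s)"
proof -
  define T where "T = vector_derivative \<gamma>' (at s)"
  have T: "(\<gamma>' has_vector_derivative T) (at s)"
    using velocity_differentiable[OF assms] vector_derivative_works T_def by blast
  have "lor T (\<gamma> s) + lor (\<gamma>' s) (\<gamma>' s) = 0"
    by (rule has_real_derivative_locally_constant[OF open_I assms _
          has_real_derivative_lor[OF T velocity[OF assms]]])
      (rule lor_velocity_position)
  then have "lor T (\<gamma> s) = -1" using unit_speed[OF assms] by simp
  then have "covD \<gamma> \<gamma>' s = T - \<gamma> s" by (simp add: covD_def flip: T_def)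
  with covD_velocity[OF assms] T show ?thesis by (simp add: algebra_simps)
qed

lemma projection_hyperbolic:
  "\<exists>a1 a2. \<forall>s\<in>I. lor (\<gamma> s) a = a1 * cosh s + a2 * sinh s \<and> lor (\<gamma>' s) a = a1 * sinh s + a2 * cosh s"
proof -
  have f: "((\<lambda>s. lor (\<gamma> s) a) has_vector_derivative lor (\<gamma>' s) a) (at s)" if "s \<in> I" for s
    using has_real_derivative_lor[OF velocity[OF that] has_vector_derivative_const[of a]]
    by (simp add: has_real_derivative_iff_has_vector_derivative lor_zero_right)
  have g: "((\<lambda>s. lor (\<gamma>' s) a) has_vector_derivative lor (\<gamma> s) a) (at s)" if "s \<in> I" for s
    using has_real_derivative_lor[OF velocity_has_derivative[OF that] has_vector_derivative_const[of a]]
    by (simp add: has_real_derivative_iff_has_vector_derivative lor_simps field_cross_def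
        lor_lcross_left)
  obtain c1 c2 where "\<forall>s\<in>I. lor (\<gamma> s) a = cosh s *\<^sub>R c1 + sinh s *\<^sub>R c2
      \<and> lor (\<gamma>' s) a = sinh s *\<^sub>R c1 + cosh s *\<^sub>R c2"
    using hyperbolic_ode_solution[OF interval_I f g] by blast
  then show ?thesis by (auto simp: mult.commute)
qed

lemma field_cross_self:
  assumes "s \<in> I"
  shows "lor (field_cross s) (field_cross s) = lor a a + (lor (\<gamma> s) a)\<^sup>2 - (lor (\<gamma>' s) a)\<^sup>2"
  using lor_lcross_self_orthonormal[OF lor_position_self unit_speed lor_velocity_position, OF assms assms assms]
  by (simp add: field_cross_def lor_commute[of a "\<gamma> s"] lor_commute[of a "\<gamma>' s"])

lemma geodesic_in_lorentzian_plane: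
  assumes "I \<noteq> {}" "q \<noteq> 0" and geodesic: "\<forall>s\<in>I. covD \<gamma> \<gamma>' s = 0"
  shows "\<exists>v w. lor v v = -1 \<and> lor w w = 1 \<and> lor v w = 0 \<and> a \<in> span {v, w} \<and>
           (\<forall>s\<in>I. \<gamma> s = cosh s *\<^sub>R v + sinh s *\<^sub>R w)"
proof -
  have no_force: "field_cross s = 0" if "s \<in> I" for s
    using geodesic covD_velocity[OF that] that \<open>q \<noteq> 0\<close> by simp
  have "(\<gamma>' has_vector_derivative \<gamma> s) (at s)" if "s \<in> I" for s
    using velocity_has_derivative[OF that] no_force[OF that] by simp
  then obtain v w where vw: "\<And>s. s \<in> I \<Longrightarrow>
      \<gamma> s = cosh s *\<^sub>R v + sinh s *\<^sub>R w \<and> \<gamma>' s = sinh s *\<^sub>R v + cosh s *\<^sub>R w"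
    using hyperbolic_ode_solution[OF interval_I velocity] by blast
  obtain s0 where s0: "s0 \<in> I" using assms(1) by blast
  define c sh where "c = cosh s0" and "sh = sinh s0"
  have c_sh: "c * c - sh * sh = 1" using cosh_square_eq[of s0] by (simp add: c_def sh_def power2_eq_square)
  have "c *\<^sub>R \<gamma> s0 - sh *\<^sub>R \<gamma>' s0 = (c * c - sh * sh) *\<^sub>R v"
    and "c *\<^sub>R \<gamma>' s0 - sh *\<^sub>R \<gamma> s0 = (c * c - sh * sh) *\<^sub>R w"
    using vw[OF s0] by (simp_all add: c_def sh_def algebra_simps)
  then have v: "v = c *\<^sub>R \<gamma> s0 - sh *\<^sub>R \<gamma>' s0" and w: "w = c *\<^sub>R \<gamma>' s0 - sh *\<^sub>R \<gamma> s0"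
    using c_sh by simp_all
  have frame: "lor (\<gamma> s0) (\<gamma> s0) = -1" "lor (\<gamma>' s0) (\<gamma>' s0) = 1"
    "lor (\<gamma>' s0) (\<gamma> s0) = 0" "lor (\<gamma> s0) (\<gamma>' s0) = 0"
    using lor_position_self unit_speed lor_velocity_position lor_commute s0 by metis+
  have "lor v v = -1" "lor w w = 1" "lor v w = 0"
    using c_sh by (simp_all add: v w lor_simps frame algebra_simps)
  moreover have "a \<in> span {v, w}"
  proof -
    have "a = lor a (\<gamma>' s0) *\<^sub>R \<gamma>' s0 - lor a (\<gamma> s0) *\<^sub>R \<gamma> s0"
      using lcross_eq_0_decompose[OF in_H3[OF s0] frame(2,3)] no_force[OF s0]
      by (simp add: field_cross_def)
    moreover have "\<gamma> s0 \<in> span {v, w}" "\<gamma>' s0 \<in> span {v, w}"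
      using vw[OF s0] by (simp_all add: span_add span_scale span_base)
    ultimately show ?thesis by (metis span_diff span_scale)
  qed
  ultimately show ?thesis using vw by blast
qed

lemma field_cross_self_hyperbolic:
  assumes "\<And>s. s \<in> I \<Longrightarrow>
      lor (\<gamma> s) a = a1 * cosh s + a2 * sinh s \<and> lor (\<gamma>' s) a = a1 * sinh s + a2 * cosh s"
    and "s \<in> I"
  shows "lor (field_cross s) (field_cross s) = lor a a + a1\<^sup>2 - a2\<^sup>2"
proof -
  have "(a1 * cosh s + a2 * sinh s)\<^sup>2 - (a1 * sinh s + a2 * cosh s)\<^sup>2
      = (a1\<^sup>2 - a2\<^sup>2) * ((cosh s)\<^sup>2 - (sinh s)\<^sup>2)" by algebra
  then show ?thesis using field_cross_self[OF assms(2)] assms by (simp add: cosh_square_eq)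
qed

lemma field_cross_has_derivative:
  assumes "s \<in> I"
  shows "(field_cross has_vector_derivative q *\<^sub>R lcross (\<gamma> s) a (field_cross s)) (at s)"
  using has_vector_derivative_lcross[OF velocity[OF assms] velocity_has_derivative[OF assms], of a]
  by (simp add: field_cross_def[abs_def] lcross_add_right lcross_scaleR_right lcross_base_right)

lemma frenet_curvature_eq:
  "s \<in> I \<Longrightarrow> frenet_curvature \<gamma> \<gamma>' s = \<bar>q\<bar> * sqrt (lor (field_cross s) (field_cross s))"
  by (simp add: frenet_curvature_def covD_velocity lor_simps real_sqrt_mult flip: mult.assoc)

lemma field_cross_self_pos:
  assumes "\<And>s. s \<in> I \<Longrightarrow>
      lor (\<gamma> s) a = a1 * cosh s + a2 * sinh s \<and> lor (\<gamma>' s) a = a1 * sinh s + a2 * cosh s"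
    and "\<not> (\<forall>s\<in>I. covD \<gamma> \<gamma>' s = 0)"
  shows "lor a a + a1\<^sup>2 - a2\<^sup>2 > 0"
proof -
  obtain s where s: "s \<in> I" and "covD \<gamma> \<gamma>' s \<noteq> 0" using assms(2) by blast
  then have "field_cross s \<noteq> 0" using covD_velocity by auto
  moreover have "lor (field_cross s) (\<gamma> s) = 0" by (simp add: field_cross_def lor_lcross_base)
  ultimately show ?thesis
    using lor_self_nonneg_tangent[OF in_H3[OF s]] field_cross_self_hyperbolic[OF assms(1) s]
    by force
qed

context
  fixes C :: real
  assumes q_nz: "q \<noteq> 0" and C_pos: "C > 0"
    and field_cross_self_const: "\<And>s. s \<in> I \<Longrightarrow> lor (field_cross s) (field_cross s) = C"
begin

lemma frenet_curvature_const: "s \<in> I \<Longrightarrow> frenet_curvature \<gamma> \<gamma>' s = \<bar>q\<bar> * sqrt C"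
  by (simp add: frenet_curvature_eq field_cross_self_const)

lemma frenet_normal_eq: "s \<in> I \<Longrightarrow> frenet_normal \<gamma> \<gamma>' s = (sgn q / sqrt C) *\<^sub>R field_cross s"
  using q_nz C_pos by (simp add: frenet_normal_def frenet_curvature_const covD_velocity sgn_if)

lemma frenet_normal_has_derivative:
  assumes "s \<in> I"
  shows "(frenet_normal \<gamma> \<gamma>' has_vector_derivative (\<bar>q\<bar> / sqrt C) *\<^sub>R lcross (\<gamma> s) a (field_cross s)) (at s)"
proof -
  have "((\<lambda>s. (sgn q / sqrt C) *\<^sub>R field_cross s) has_vector_derivative
      (sgn q / sqrt C) *\<^sub>R (q *\<^sub>R lcross (\<gamma> s) a (field_cross s)) + 0 *\<^sub>R field_cross s) (at s)"
    by (intro has_vector_derivative_scaleR DERIV_const field_cross_has_derivative assms)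
  moreover have "(sgn q / sqrt C) *\<^sub>R (q *\<^sub>R lcross (\<gamma> s) a (field_cross s)) + 0 *\<^sub>R field_cross s
      = (\<bar>q\<bar> / sqrt C) *\<^sub>R lcross (\<gamma> s) a (field_cross s)"
    by (simp add: abs_sgn[of q] mult.commute)
  ultimately have "((\<lambda>s. (sgn q / sqrt C) *\<^sub>R field_cross s) has_vector_derivative
      (\<bar>q\<bar> / sqrt C) *\<^sub>R lcross (\<gamma> s) a (field_cross s)) (at s)" by metis
  then show ?thesis
    by (rule has_vector_derivative_transform_within_open[OF _ open_I assms]) (simp add: frenet_normal_eq)
qed

lemma covD_frenet_normal:
  assumes "s \<in> I"
  shows "covD \<gamma> (frenet_normal \<gamma> \<gamma>') s =
    - frenet_curvature \<gamma> \<gamma>' s *\<^sub>R \<gamma>' s + (q * lor (\<gamma>' s) a) *\<^sub>R hcross (\<gamma> s) (\<gamma>' s) (frenet_normal \<gamma> \<gamma>' s)"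
proof -
  define f g where "f = lor (\<gamma> s) a" and "g = lor (\<gamma>' s) a"
  have frame: "lor (\<gamma> s) (\<gamma> s) = -1" "lor (\<gamma>' s) (\<gamma>' s) = 1"
    "lor (\<gamma>' s) (\<gamma> s) = 0" "lor (\<gamma> s) (\<gamma>' s) = 0"
    "lor a (\<gamma> s) = f" "lor a (\<gamma>' s) = g" "lor (\<gamma> s) a = f" "lor (\<gamma>' s) a = g"
    using lor_position_self unit_speed lor_velocity_position assms
    by (simp_all add: f_def g_def lor_commute)
  have Y: "lcross (\<gamma> s) a (field_cross s) = g *\<^sub>R a - (lor a a + f\<^sup>2) *\<^sub>R \<gamma>' s + (g * f) *\<^sub>R \<gamma> s"
    by (simp add: field_cross_def lcross_lcross frame power2_eq_square algebra_simps)
  have B: "lcross (\<gamma> s) (\<gamma>' s) (field_cross s) = a - g *\<^sub>R \<gamma>' s + f *\<^sub>R \<gamma> s"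
    by (simp add: field_cross_def lcross_lcross frame algebra_simps)
  have L: "lor a a + f\<^sup>2 = C + g\<^sup>2"
    using field_cross_self[OF assms] field_cross_self_const[OF assms] by (simp add: f_def g_def)
  define r where "r = \<bar>q\<bar> / sqrt C"
  have "covD \<gamma> (frenet_normal \<gamma> \<gamma>') s = r *\<^sub>R lcross (\<gamma> s) a (field_cross s)"
    by (simp add: covD_def vector_derivative_at[OF frenet_normal_has_derivative[OF assms]]
        lor_scaleR_left lor_lcross_base r_def)
  also have "\<dots> = - (r * C) *\<^sub>R \<gamma>' s + (r * g) *\<^sub>R (a - g *\<^sub>R \<gamma>' s + f *\<^sub>R \<gamma> s)"
    unfolding Y L by (simp add: algebra_simps power2_eq_square)
  also have "\<dots> = - frenet_curvature \<gamma> \<gamma>' s *\<^sub>R \<gamma>' s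
      + (q * g) *\<^sub>R hcross (\<gamma> s) (\<gamma>' s) (frenet_normal \<gamma> \<gamma>' s)"
  proof -
    have "r * C = \<bar>q\<bar> * sqrt C" using C_pos by (simp add: r_def field_simps real_sqrt_mult_self)
    moreover have "r * g = q * g * (sgn q / sqrt C)" by (simp add: r_def abs_sgn[of q])
    ultimately show ?thesis
      by (simp add: frenet_curvature_const frenet_normal_eq hcross_eq_lcross in_H3 assms
          lcross_scaleR_right B)
  qed
  finally show ?thesis by (simp add: g_def)
qed

end

lemma nongeodesic_frenet:
  assumes "q \<noteq> 0"
    and proj: "\<And>s. s \<in> I \<Longrightarrow>
      lor (\<gamma> s) a = a1 * cosh s + a2 * sinh s \<and> lor (\<gamma>' s) a = a1 * sinh s + a2 * cosh s"
    and "\<not> (\<forall>s\<in>I. covD \<gamma> \<gamma>' s = 0)" and "s \<in> I"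
  shows "frenet_curvature \<gamma> \<gamma>' s > 0"
    and "(frenet_curvature \<gamma> \<gamma>' s)\<^sup>2 = q\<^sup>2 * (lor a a + a1\<^sup>2 - a2\<^sup>2)"
    and "frenet_normal \<gamma> \<gamma>' differentiable (at s)"
    and "covD \<gamma> (frenet_normal \<gamma> \<gamma>') s = - frenet_curvature \<gamma> \<gamma>' s *\<^sub>R \<gamma>' s
          + (q * (a1 * sinh s + a2 * cosh s)) *\<^sub>R hcross (\<gamma> s) (\<gamma>' s) (frenet_normal \<gamma> \<gamma>' s)"
proof -
  note C_pos = field_cross_self_pos[OF proj assms(3)]
  note frenet = assms(1) C_pos field_cross_self_hyperbolic[OF proj]
  show "frenet_curvature \<gamma> \<gamma>' s > 0" "(frenet_curvature \<gamma> \<gamma>' s)\<^sup>2 = q\<^sup>2 * (lor a a + a1\<^sup>2 - a2\<^sup>2)"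
    using frenet_curvature_const[OF frenet assms(4)] assms(1) C_pos by (simp_all add: power_mult_distrib)
  show "frenet_normal \<gamma> \<gamma>' differentiable (at s)"
    by (rule differentiableI_vector[OF frenet_normal_has_derivative[OF frenet assms(4)]])
  show "covD \<gamma> (frenet_normal \<gamma> \<gamma>') s = - frenet_curvature \<gamma> \<gamma>' s *\<^sub>R \<gamma>' s
      + (q * (a1 * sinh s + a2 * cosh s)) *\<^sub>R hcross (\<gamma> s) (\<gamma>' s) (frenet_normal \<gamma> \<gamma>' s)"
    using covD_frenet_normal[OF frenet assms(4)] proj[OF assms(4)] by simp
qed

end

theorem theorem3:
  fixes a :: "real^4" and q :: real and I :: "real set" and \<gamma> \<gamma>' :: "real \<Rightarrow> real^4"
  assumes a_nz: "a \<noteq> 0"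
    and q_nz: "q \<noteq> 0"
    and I_open: "open I" and I_interval: "is_interval I" and I_ne: "I \<noteq> {}"
    and in_H3: "\<And>s. s \<in> I \<Longrightarrow> \<gamma> s \<in> H3"
    and deriv: "\<And>s. s \<in> I \<Longrightarrow> (\<gamma> has_vector_derivative \<gamma>' s) (at s)"
    and deriv2: "\<And>s. s \<in> I \<Longrightarrow> \<gamma>' differentiable (at s)"
    and unit_speed: "\<And>s. s \<in> I \<Longrightarrow> lor (\<gamma>' s) (\<gamma>' s) = 1"
    and traj: "\<And>s. s \<in> I \<Longrightarrow> covD \<gamma> \<gamma>' s = q *\<^sub>R hcross (\<gamma> s) (confV a (\<gamma> s)) (\<gamma>' s)"
  shows "\<exists>a1 a2 :: real.
     (\<forall>s \<in> I. lor (\<gamma> s) a = a1 * cosh s + a2 * sinh s)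
   \<and> ((\<forall>s \<in> I. covD \<gamma> \<gamma>' s = 0) \<longrightarrow>
        (\<exists>v w. lor v v = -1 \<and> lor w w = 1 \<and> lor v w = 0 \<and> a \<in> span {v, w} \<and>
           (\<forall>s \<in> I. \<gamma> s = cosh s *\<^sub>R v + sinh s *\<^sub>R w)))
   \<and> (\<not> (\<forall>s \<in> I. covD \<gamma> \<gamma>' s = 0) \<longrightarrow>
        (let \<kappa> = (\<lambda>s. sqrt (lor (covD \<gamma> \<gamma>' s) (covD \<gamma> \<gamma>' s)));
             N = (\<lambda>s. (1 / \<kappa> s) *\<^sub>R covD \<gamma> \<gamma>' s);
             B = (\<lambda>s. hcross (\<gamma> s) (\<gamma>' s) (N s));
             \<tau> = (\<lambda>s. q * (a1 * sinh s + a2 * cosh s))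
         in (\<forall>s \<in> I. \<kappa> s > 0 \<and> (\<kappa> s)\<^sup>2 = q\<^sup>2 * (lor a a + a1\<^sup>2 - a2\<^sup>2))
          \<and> (\<forall>s \<in> I. N differentiable (at s) \<and>
                covD \<gamma> N s = - \<kappa> s *\<^sub>R \<gamma>' s + \<tau> s *\<^sub>R B s)))"
proof -
  interpret conformal_trajectory a q I \<gamma> \<gamma>'
    using I_open I_interval in_H3 deriv deriv2 unit_speed traj by unfold_locales
  obtain a1 a2 where proj: "\<And>s. s \<in> I \<Longrightarrow>
      lor (\<gamma> s) a = a1 * cosh s + a2 * sinh s \<and> lor (\<gamma>' s) a = a1 * sinh s + a2 * cosh s"
    using projection_hyperbolic by blast
  show ?thesis
    unfolding Let_def
  proof (rule exI[of _ a1], rule exI[of _ a2], intro conjI impI ballI)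
  qed (use proj geodesic_in_lorentzian_plane[OF I_ne q_nz] nongeodesic_frenet[OF q_nz proj] in
      \<open>auto simp: frenet_curvature_def frenet_normal_def[abs_def]\<close>)
qed

end
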